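(* If $G$ is any blowup of the Petersen graph, then $\chi(G)\le\lceil\frac54\omega(G)\rceil$.
   Context: A blowup of a graph $H$ is any graph whose vertex set can be partitioned into $|V(H)|$ (not necessarily non-empty) cliques $Q_v$, $v\in V(H)$, such that $Q_u$ is complete to $Q_v$ if $uv\in E(H)$ and there are no edges between $Q_u$ and $Q_v$ if $uv\notin E(H)$. *)

theory Defs
  imports Complex_Main
begin

definition simple_graph :: "'a set \<Rightarrow> ('a \<Rightarrow> 'a \<Rightarrow> bool) \<Rightarrow> bool" where
  "simple_graph V E \<longleftrightarrow> finite V \<and> (\<forall>x y. E x y \<longrightarrow> x \<in> V \<and> y \<in> V)
     \<and> (\<forall>x y. E x y \<longrightarrow> E y x) \<and> (\<forall>x. \<not> E x x)"

definition is_clique :: "('a \<Rightarrow> 'a \<Rightarrow> bool) \<Rightarrow> 'a set \<Rightarrow> bool" where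
  "is_clique E K \<longleftrightarrow> (\<forall>x\<in>K. \<forall>y\<in>K. x \<noteq> y \<longrightarrow> E x y)"

definition clique_number :: "'a set \<Rightarrow> ('a \<Rightarrow> 'a \<Rightarrow> bool) \<Rightarrow> nat" where
  "clique_number V E = Max {card K | K. K \<subseteq> V \<and> is_clique E K}"

definition proper_colouring :: "'a set \<Rightarrow> ('a \<Rightarrow> 'a \<Rightarrow> bool) \<Rightarrow> nat \<Rightarrow> ('a \<Rightarrow> nat) \<Rightarrow> bool" where
  "proper_colouring V E k f \<longleftrightarrow> (\<forall>x\<in>V. f x < k) \<and> (\<forall>x\<in>V. \<forall>y\<in>V. E x y \<longrightarrow> f x \<noteq> f y)"

definition chromatic_number :: "'a set \<Rightarrow> ('a \<Rightarrow> 'a \<Rightarrow> bool) \<Rightarrow> nat" where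
  "chromatic_number V E = (LEAST k. \<exists>f. proper_colouring V E k f)"

definition petersen_vertices :: "nat set set" where
  "petersen_vertices = {S. S \<subseteq> {0..<5} \<and> card S = 2}"

definition petersen_adj :: "nat set \<Rightarrow> nat set \<Rightarrow> bool" where
  "petersen_adj S T \<longleftrightarrow> S \<in> petersen_vertices \<and> T \<in> petersen_vertices \<and> S \<inter> T = {}"

definition is_blowup :: "'a set \<Rightarrow> ('a \<Rightarrow> 'a \<Rightarrow> bool) \<Rightarrow> 'b set \<Rightarrow> ('b \<Rightarrow> 'b \<Rightarrow> bool) \<Rightarrow> bool" where
  "is_blowup V E HV HE \<longleftrightarrow> (\<exists>Q :: 'b \<Rightarrow> 'a set.
      V = (\<Union>v\<in>HV. Q v)
    \<and> (\<forall>u\<in>HV. \<forall>v\<in>HV. u \<noteq> v \<longrightarrow> Q u \<inter> Q v = {})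
    \<and> (\<forall>v\<in>HV. is_clique E (Q v))
    \<and> (\<forall>u\<in>HV. \<forall>v\<in>HV. u \<noteq> v \<longrightarrow> (\<forall>x\<in>Q u. \<forall>y\<in>Q v. E x y \<longleftrightarrow> HE u v)))"

end

theory Submission
  imports Defs
begin

text \<open>Colouring a blowup with parts \<open>Q v\<close> amounts to a weighted colouring of the Petersen graph:
  every vertex \<open>v\<close> needs \<open>|Q v|\<close> colours, adjacent vertices disjoint ones. Since the Petersen graph
  is triangle-free, the only clique constraints are that single weights and the two weights along
  an edge are at most \<open>w = \<omega>(G)\<close>. By induction on the total weight, every such weighting has a
  weighted colouring with \<open>\<lceil>5w/4\<rceil>\<close> colours. Either some vertex of positive weight has a closed
  neighbourhood of weight at most \<open>\<lceil>5w/4\<rceil>\<close>, and is coloured after all others; or all weights are at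
  most \<open>w - 2\<close> with \<open>w \<ge> 4\<close>, and one lowers every weight by 2 and adds five colours along the
  2-fold colouring \<open>S \<mapsto> S\<close> of the Kneser graph \<open>K(5,2)\<close>; or else \<open>w \<le> 4\<close> and every weight is
  below \<open>w\<close>, where explicit colourings built on a proper 3-colouring suffice.\<close>

section \<open>Weighted colourings\<close>

definition weight_bounded :: "'b set \<Rightarrow> ('b \<Rightarrow> 'b \<Rightarrow> bool) \<Rightarrow> nat \<Rightarrow> ('b \<Rightarrow> nat) \<Rightarrow> bool" where
  "weight_bounded HV HE w n \<longleftrightarrow>
     (\<forall>v\<in>HV. n v \<le> w) \<and> (\<forall>u\<in>HV. \<forall>v\<in>HV. HE u v \<longrightarrow> n u + n v \<le> w)"

definition weight_colouring ::
    "'b set \<Rightarrow> ('b \<Rightarrow> 'b \<Rightarrow> bool) \<Rightarrow> nat \<Rightarrow> ('b \<Rightarrow> nat) \<Rightarrow> ('b \<Rightarrow> nat set) \<Rightarrow> bool" where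
  "weight_colouring HV HE k n C \<longleftrightarrow>
     (\<forall>v\<in>HV. C v \<subseteq> {..<k} \<and> n v \<le> card (C v)) \<and> (\<forall>u\<in>HV. \<forall>v\<in>HV. HE u v \<longrightarrow> C u \<inter> C v = {})"

definition weight_colourable :: "'b set \<Rightarrow> ('b \<Rightarrow> 'b \<Rightarrow> bool) \<Rightarrow> nat \<Rightarrow> ('b \<Rightarrow> nat) \<Rightarrow> bool" where
  "weight_colourable HV HE k n \<longleftrightarrow> (\<exists>C. weight_colouring HV HE k n C)"

lemma weight_colourable_exact:
  assumes "weight_colourable HV HE k n"
  obtains C where "\<forall>v\<in>HV. C v \<subseteq> {..<k} \<and> card (C v) = n v"
    and "\<forall>u\<in>HV. \<forall>v\<in>HV. HE u v \<longrightarrow> C u \<inter> C v = {}"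
proof -
  obtain C where C: "\<forall>v\<in>HV. C v \<subseteq> {..<k} \<and> n v \<le> card (C v)"
    and disj: "\<forall>u\<in>HV. \<forall>v\<in>HV. HE u v \<longrightarrow> C u \<inter> C v = {}"
    using assms unfolding weight_colourable_def weight_colouring_def by blast
  have "\<exists>D. D \<subseteq> C v \<and> card D = n v" if "v \<in> HV" for v
    using C that obtain_subset_with_card_n by metis
  then obtain D where D: "\<forall>v\<in>HV. D v \<subseteq> C v \<and> card (D v) = n v"
    by metis
  show thesis
  proof (rule that[of D])
    show "\<forall>v\<in>HV. D v \<subseteq> {..<k} \<and> card (D v) = n v" using C D by blast
    show "\<forall>u\<in>HV. \<forall>v\<in>HV. HE u v \<longrightarrow> D u \<inter> D v = {}" using disj D by blast
  qed
qed

lemma weight_colourable_zero: "\<forall>v\<in>HV. n v = 0 \<Longrightarrow> weight_colourable HV HE k n"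
  unfolding weight_colourable_def weight_colouring_def by (intro exI[of _ "\<lambda>_. {}"]) auto

lemma weight_colourable_mono:
  assumes "weight_colourable HV HE k n" and "\<forall>v\<in>HV. m v \<le> n v"
  shows "weight_colourable HV HE k m"
  using assms unfolding weight_colourable_def weight_colouring_def by (blast intro: order_trans)

lemma weight_colourable_add:
  assumes "weight_colourable HV HE k n" and "weight_colourable HV HE l m"
  shows "weight_colourable HV HE (k + l) (\<lambda>v. n v + m v)"
proof -
  obtain C where C: "\<forall>v\<in>HV. C v \<subseteq> {..<k} \<and> n v \<le> card (C v)"
    and disjC: "\<forall>u\<in>HV. \<forall>v\<in>HV. HE u v \<longrightarrow> C u \<inter> C v = {}"
    using assms(1) unfolding weight_colourable_def weight_colouring_def by blast
  obtain D where D: "\<forall>v\<in>HV. D v \<subseteq> {..<l} \<and> m v \<le> card (D v)"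
    and disjD: "\<forall>u\<in>HV. \<forall>v\<in>HV. HE u v \<longrightarrow> D u \<inter> D v = {}"
    using assms(2) unfolding weight_colourable_def weight_colouring_def by blast
  have "weight_colouring HV HE (k + l) (\<lambda>v. n v + m v) (\<lambda>v. C v \<union> (+) k ` D v)"
    unfolding weight_colouring_def
  proof (intro conjI ballI impI)
    fix v assume v: "v \<in> HV"
    have Cv: "C v \<subseteq> {..<k}" and Dv: "D v \<subseteq> {..<l}" using C D v by blast+
    then show "C v \<union> (+) k ` D v \<subseteq> {..<k + l}" by auto
    have "finite (C v)" "finite (D v)"
      using finite_subset[OF Cv] finite_subset[OF Dv] by simp_all
    moreover have "C v \<inter> (+) k ` D v = {}" using C v by auto
    ultimately have "card (C v \<union> (+) k ` D v) = card (C v) + card (D v)"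
      by (simp add: card_Un_disjoint card_image)
    moreover have "n v \<le> card (C v)" "m v \<le> card (D v)" using C D v by blast+
    ultimately show "n v + m v \<le> card (C v \<union> (+) k ` D v)" by linarith
  next
    fix u v assume "u \<in> HV" "v \<in> HV" "HE u v"
    then have "C u \<inter> C v = {}" "D u \<inter> D v = {}" "C u \<subseteq> {..<k}" "C v \<subseteq> {..<k}"
      using C disjC disjD by blast+
    then show "(C u \<union> (+) k ` D u) \<inter> (C v \<union> (+) k ` D v) = {}" by auto
  qed
  then show ?thesis unfolding weight_colourable_def by blast
qed

lemma weight_colourable_extend:
  assumes H: "simple_graph HV HE" and v: "v \<in> HV"
    and col: "weight_colourable HV HE k (n(v := 0))"
    and room: "n v + (\<Sum>u\<in>{u\<in>HV. HE v u}. n u) \<le> k"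
  shows "weight_colourable HV HE k n"
proof -
  let ?N = "{u\<in>HV. HE v u}"
  obtain C where C: "\<forall>u\<in>HV. C u \<subseteq> {..<k} \<and> card (C u) = (n(v := 0)) u"
    and disj: "\<forall>u\<in>HV. \<forall>u'\<in>HV. HE u u' \<longrightarrow> C u \<inter> C u' = {}"
    using weight_colourable_exact[OF col] by blast
  have finN: "finite ?N" and Nv: "\<And>u. u \<in> ?N \<Longrightarrow> u \<noteq> v"
    and sym: "\<And>u u'. HE u u' \<Longrightarrow> HE u' u" and irrefl: "\<not> HE v v"
    using H unfolding simple_graph_def by auto
  define U where "U = (\<Union>u\<in>?N. C u)"
  have "card U \<le> (\<Sum>u\<in>?N. card (C u))" unfolding U_def by (rule card_UN_le[OF finN])
  also have "\<dots> = (\<Sum>u\<in>?N. n u)" by (rule sum.cong) (use C Nv in auto)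
  finally have "card U \<le> (\<Sum>u\<in>?N. n u)" .
  moreover have "U \<subseteq> {..<k}" unfolding U_def using C by blast
  ultimately have "n v \<le> card ({..<k} - U)"
    using room by (simp add: card_Diff_subset finite_subset)
  then obtain D where D: "D \<subseteq> {..<k} - U" "card D = n v"
    using obtain_subset_with_card_n by metis
  have "weight_colouring HV HE k n (C(v := D))" unfolding weight_colouring_def
  proof (intro conjI ballI impI)
    fix u assume "u \<in> HV"
    then show "(C(v := D)) u \<subseteq> {..<k}" "n u \<le> card ((C(v := D)) u)" using C D by auto
  next
    fix u u' assume u: "u \<in> HV" and u': "u' \<in> HV" and adj: "HE u u'"
    have "D \<inter> C x = {}" if "x \<in> ?N" for x using that D unfolding U_def by blast
    then show "(C(v := D)) u \<inter> (C(v := D)) u' = {}"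
      using disj u u' adj sym[OF adj] irrefl by (cases "u = v"; cases "u' = v") auto
  qed
  then show ?thesis unfolding weight_colourable_def by blast
qed

lemma weight_bounded_update_zero:
  assumes "weight_bounded HV HE w n"
  shows "weight_bounded HV HE w (n(v := 0))"
  unfolding weight_bounded_def
proof (intro conjI ballI impI)
  fix u assume "u \<in> HV"
  then show "(n(v := 0)) u \<le> w" using assms unfolding weight_bounded_def by simp
next
  fix u u' assume "u \<in> HV" "u' \<in> HV" "HE u u'"
  then have "n u + n u' \<le> w" using assms unfolding weight_bounded_def by blast
  then show "(n(v := 0)) u + (n(v := 0)) u' \<le> w" by simp
qed

lemma weight_bounded_diff:
  assumes "weight_bounded HV HE w n" and room: "\<forall>v\<in>HV. n v + d \<le> w"
  shows "weight_bounded HV HE (w - 2 * d) (\<lambda>v. n v - d)"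
  unfolding weight_bounded_def
proof (intro conjI ballI impI)
  fix v assume "v \<in> HV"
  then have "n v + d \<le> w" using room by blast
  then show "n v - d \<le> w - 2 * d" by linarith
next
  fix u v assume "u \<in> HV" "v \<in> HV" "HE u v"
  then have "n u + d \<le> w" "n v + d \<le> w" "n u + n v \<le> w"
    using assms unfolding weight_bounded_def by blast+
  then show "n u - d + (n v - d) \<le> w - 2 * d" by linarith
qed

section \<open>Blowups\<close>

definition blowup_partition ::
    "'a set \<Rightarrow> ('a \<Rightarrow> 'a \<Rightarrow> bool) \<Rightarrow> 'b set \<Rightarrow> ('b \<Rightarrow> 'b \<Rightarrow> bool) \<Rightarrow> ('b \<Rightarrow> 'a set) \<Rightarrow> bool" where
  "blowup_partition V E HV HE Q \<longleftrightarrow>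
      V = (\<Union>v\<in>HV. Q v)
    \<and> (\<forall>u\<in>HV. \<forall>v\<in>HV. u \<noteq> v \<longrightarrow> Q u \<inter> Q v = {})
    \<and> (\<forall>v\<in>HV. is_clique E (Q v))
    \<and> (\<forall>u\<in>HV. \<forall>v\<in>HV. u \<noteq> v \<longrightarrow> (\<forall>x\<in>Q u. \<forall>y\<in>Q v. E x y \<longleftrightarrow> HE u v))"

lemma is_blowup_iff: "is_blowup V E HV HE \<longleftrightarrow> (\<exists>Q. blowup_partition V E HV HE Q)"
  unfolding is_blowup_def blowup_partition_def ..

lemma card_le_clique_number:
  assumes "finite V" "K \<subseteq> V" "is_clique E K"
  shows "card K \<le> clique_number V E"
proof -
  have "{card K | K. K \<subseteq> V \<and> is_clique E K} \<subseteq> card ` Pow V" by auto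
  then have "finite {card K | K. K \<subseteq> V \<and> is_clique E K}"
    using assms(1) finite_subset by blast
  then show ?thesis unfolding clique_number_def by (rule Max_ge) (use assms in auto)
qed

lemma chromatic_number_le: "proper_colouring V E k f \<Longrightarrow> chromatic_number V E \<le> k"
  unfolding chromatic_number_def by (rule Least_le) blast

lemma blowup_weight_bounded:
  assumes G: "simple_graph V E" and H: "simple_graph HV HE"
    and Q: "blowup_partition V E HV HE Q"
  shows "weight_bounded HV HE (clique_number V E) (\<lambda>v. card (Q v))"
proof -
  have finV: "finite V" and symE: "\<And>x y. E x y \<Longrightarrow> E y x"
    using G unfolding simple_graph_def by auto
  have QV: "\<And>v. v \<in> HV \<Longrightarrow> Q v \<subseteq> V" using Q unfolding blowup_partition_def by blast
  have clique: "\<And>v. v \<in> HV \<Longrightarrow> is_clique E (Q v)" using Q unfolding blowup_partition_def by blast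
  show ?thesis unfolding weight_bounded_def
  proof (intro conjI ballI impI)
    fix v assume "v \<in> HV"
    then show "card (Q v) \<le> clique_number V E" by (intro card_le_clique_number finV QV clique)
  next
    fix u v assume u: "u \<in> HV" and v: "v \<in> HV" and adj: "HE u v"
    have "u \<noteq> v" using H adj unfolding simple_graph_def by auto
    then have disj: "Q u \<inter> Q v = {}"
      and cross: "\<forall>x\<in>Q u. \<forall>y\<in>Q v. E x y"
      using Q u v adj unfolding blowup_partition_def by blast+
    have "is_clique E (Q u \<union> Q v)"
      using clique[OF u] clique[OF v] cross symE unfolding is_clique_def by blast
    then have "card (Q u \<union> Q v) \<le> clique_number V E"
      using card_le_clique_number finV QV u v by (metis Un_least)
    moreover have "finite (Q u)" "finite (Q v)"
      using finite_subset[OF QV finV] u v by simp_all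
    ultimately show "card (Q u) + card (Q v) \<le> clique_number V E"
      using disj by (simp add: card_Un_disjoint)
  qed
qed

lemma blowup_chromatic_number_le:
  assumes G: "simple_graph V E" and Q: "blowup_partition V E HV HE Q"
    and col: "weight_colourable HV HE k (\<lambda>v. card (Q v))"
  shows "chromatic_number V E \<le> k"
proof -
  obtain C where C: "\<forall>v\<in>HV. C v \<subseteq> {..<k} \<and> card (Q v) \<le> card (C v)"
    and disjC: "\<forall>u\<in>HV. \<forall>v\<in>HV. HE u v \<longrightarrow> C u \<inter> C v = {}"
    using col unfolding weight_colourable_def weight_colouring_def by blast
  have finV: "finite V" and irrefl: "\<And>x. \<not> E x x" using G unfolding simple_graph_def by auto
  have QV: "V = (\<Union>v\<in>HV. Q v)"
    and cross: "\<forall>u\<in>HV. \<forall>v\<in>HV. u \<noteq> v \<longrightarrow> (\<forall>x\<in>Q u. \<forall>y\<in>Q v. E x y \<longleftrightarrow> HE u v)"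
    using Q unfolding blowup_partition_def by blast+
  have "\<exists>g. g ` Q v \<subseteq> C v \<and> inj_on g (Q v)" if v: "v \<in> HV" for v
  proof (rule card_le_inj)
    show "finite (Q v)" using finite_subset[OF _ finV] QV v by blast
    show "finite (C v)" using finite_subset[of "C v" "{..<k}"] C v by blast
    show "card (Q v) \<le> card (C v)" using C v by blast
  qed
  then obtain g where g: "\<forall>v\<in>HV. g v ` Q v \<subseteq> C v \<and> inj_on (g v) (Q v)" by metis
  obtain p where p: "\<forall>x\<in>V. p x \<in> HV \<and> x \<in> Q (p x)" using QV by (metis UN_E)
  have "proper_colouring V E k (\<lambda>x. g (p x) x)" unfolding proper_colouring_def
  proof (intro conjI ballI impI)
    fix x assume "x \<in> V"
    then show "g (p x) x < k" using p g C by blast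
  next
    fix x y assume x: "x \<in> V" and y: "y \<in> V" and e: "E x y"
    show "g (p x) x \<noteq> g (p y) y"
    proof (cases "p x = p y")
      case True
      then show ?thesis using p g x y e irrefl by (metis inj_onD)
    next
      case False
      then have "HE (p x) (p y)" using cross p x y e by blast
      then show ?thesis using disjC g p x y by blast
    qed
  qed
  then show ?thesis by (rule chromatic_number_le)
qed

section \<open>The Petersen graph\<close>

lemma petersen_vertexD:
  "S \<in> petersen_vertices \<Longrightarrow> S \<subseteq> {0..<5} \<and> card S = 2 \<and> finite S \<and> S \<noteq> {}"
  unfolding petersen_vertices_def by (auto intro: finite_subset)

lemma finite_petersen_vertices: "finite petersen_vertices"
proof -
  have "petersen_vertices \<subseteq> Pow {0..<5}" by (auto simp: petersen_vertices_def)
  then show ?thesis by (rule finite_subset) simp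
qed

lemma simple_graph_petersen: "simple_graph petersen_vertices petersen_adj"
  unfolding simple_graph_def petersen_adj_def
  using finite_petersen_vertices petersen_vertexD by auto

lemma card_petersen_neighbours:
  assumes "S \<in> petersen_vertices"
  shows "card {T\<in>petersen_vertices. petersen_adj S T} = 3"
proof -
  have "{T\<in>petersen_vertices. petersen_adj S T} = {T. T \<subseteq> {0..<5} - S \<and> card T = 2}"
    using assms unfolding petersen_adj_def petersen_vertices_def by auto
  moreover have "card ({0..<5::nat} - S) = 3"
    using petersen_vertexD[OF assms] by (simp add: card_Diff_subset)
  ultimately show ?thesis by (simp add: n_subsets choose_two)
qed

text \<open>The classes \<open>Min S = 0\<close>, \<open>Min S = 1\<close> and \<open>S \<subseteq> {2,3,4}\<close> are independent: the last one because
  two disjoint pairs need four elements.\<close>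

definition petersen_3colouring :: "nat set \<Rightarrow> nat" where
  "petersen_3colouring S = min (Min S) 2"

lemma petersen_3colouring_less: "petersen_3colouring S < 3"
  unfolding petersen_3colouring_def by simp

lemma petersen_3colouring_proper:
  assumes "petersen_adj S T"
  shows "petersen_3colouring S \<noteq> petersen_3colouring T"
proof
  assume eq: "petersen_3colouring S = petersen_3colouring T"
  have S: "S \<subseteq> {0..<5}" "card S = 2" "finite S" "S \<noteq> {}"
    and T: "T \<subseteq> {0..<5}" "card T = 2" "finite T" "T \<noteq> {}"
    and ST: "S \<inter> T = {}"
    using assms petersen_vertexD unfolding petersen_adj_def by auto
  show False
  proof (cases "Min S < 2")
    case True
    then have "Min T = Min S"
      using eq unfolding petersen_3colouring_def by (auto simp: min_def split: if_splits)
    then show False using S T ST Min_in by (metis disjoint_iff)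
  next
    case False
    then have "Min T \<ge> 2"
      using eq unfolding petersen_3colouring_def by (auto simp: min_def split: if_splits)
    then have "2 \<le> x" if "x \<in> S \<union> T" for x
      using that False Min_le[OF S(3)] Min_le[OF T(3)] by (meson Un_iff not_le order_trans)
    then have "S \<union> T \<subseteq> {2..<5}" using S(1) T(1) by auto
    then have "card (S \<union> T) \<le> card {2..<5::nat}" by (intro card_mono) auto
    then show False using S T ST by (simp add: card_Un_disjoint)
  qed
qed

lemma petersen_two_fold_colouring:
  "weight_colourable petersen_vertices petersen_adj 5 (\<lambda>_. 2)"
  unfolding weight_colourable_def weight_colouring_def
  by (rule exI[of _ "\<lambda>S. S"]) (auto simp: petersen_adj_def petersen_vertices_def)

lemma petersen_weight_colourable_3:
  assumes "\<forall>S\<in>petersen_vertices. n S \<le> 1"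
  shows "weight_colourable petersen_vertices petersen_adj 3 n"
  unfolding weight_colourable_def weight_colouring_def
  using assms petersen_3colouring_less petersen_3colouring_proper
  by (intro exI[of _ "\<lambda>S. {petersen_3colouring S}"]) auto

lemma petersen_weight_colourable_4:
  assumes "weight_bounded petersen_vertices petersen_adj 3 n"
    and "\<forall>S\<in>petersen_vertices. n S \<le> 2"
  shows "weight_colourable petersen_vertices petersen_adj 4 n"
proof -
  define C where "C S = {petersen_3colouring S} \<union> (if n S \<ge> 2 then {3} else {})" for S
  have "weight_colouring petersen_vertices petersen_adj 4 n C" unfolding weight_colouring_def
  proof (intro conjI ballI impI)
    fix S assume "S \<in> petersen_vertices"
    moreover have "petersen_3colouring S < 3" by (rule petersen_3colouring_less)
    ultimately show "C S \<subseteq> {..<4}" "n S \<le> card (C S)"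
      using assms unfolding C_def weight_bounded_def by auto
  next
    fix S T assume "S \<in> petersen_vertices" "T \<in> petersen_vertices" and adj: "petersen_adj S T"
    then have "\<not> (n S \<ge> 2 \<and> n T \<ge> 2)" using assms(1) unfolding weight_bounded_def by fastforce
    moreover have "petersen_3colouring S \<noteq> petersen_3colouring T"
      using adj by (rule petersen_3colouring_proper)
    moreover have "petersen_3colouring S < 3" "petersen_3colouring T < 3"
      by (rule petersen_3colouring_less)+
    ultimately show "C S \<inter> C T = {}" unfolding C_def by auto
  qed
  then show ?thesis unfolding weight_colourable_def by blast
qed

text \<open>If some \<open>{i,j}\<close> has weight 3, every vertex of weight 2 meets \<open>{i,j}\<close>.\<close>

lemma petersen_weight_colourable_5:
  assumes b: "weight_bounded petersen_vertices petersen_adj 4 n"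
    and le3: "\<forall>S\<in>petersen_vertices. n S \<le> 3"
  shows "weight_colourable petersen_vertices petersen_adj 5 n"
proof (cases "\<exists>S\<in>petersen_vertices. n S = 3")
  case False
  then have "\<forall>S\<in>petersen_vertices. n S \<le> 2" using le3 by fastforce
  then show ?thesis using petersen_two_fold_colouring weight_colourable_mono by blast
next
  case True
  then obtain i j where S0: "{i, j} \<in> petersen_vertices" and n0: "n {i, j} = 3"
    by (metis card_2_iff petersen_vertexD)
  define C where "C S = {petersen_3colouring S}
      \<union> (if n S = 3 \<or> (n S = 2 \<and> i \<in> S) then {3} else {})
      \<union> (if n S = 3 \<or> (n S = 2 \<and> i \<notin> S) then {4} else {})" for S
  have meet: "j \<in> S" if "S \<in> petersen_vertices" "n S = 2" "i \<notin> S" for S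
  proof (rule ccontr)
    assume "j \<notin> S"
    then have "petersen_adj S {i, j}" using that S0 unfolding petersen_adj_def by auto
    then show False using b that S0 n0 unfolding weight_bounded_def by fastforce
  qed
  have "weight_colouring petersen_vertices petersen_adj 5 n C" unfolding weight_colouring_def
  proof (intro conjI ballI impI)
    fix S assume S: "S \<in> petersen_vertices"
    have "petersen_3colouring S < 3" by (rule petersen_3colouring_less)
    then show "C S \<subseteq> {..<5}" "n S \<le> card (C S)"
      unfolding C_def using le3 S by (auto simp: card_insert_if)
  next
    fix S T assume S: "S \<in> petersen_vertices" and T: "T \<in> petersen_vertices"
      and adj: "petersen_adj S T"
    have "petersen_3colouring S \<noteq> petersen_3colouring T" using adj by (rule petersen_3colouring_proper)
    moreover have "petersen_3colouring S < 3" "petersen_3colouring T < 3"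
      by (rule petersen_3colouring_less)+
    moreover have "n S + n T \<le> 4" using b S T adj unfolding weight_bounded_def by blast
    moreover have "S \<inter> T = {}" using adj unfolding petersen_adj_def by blast
    ultimately show "C S \<inter> C T = {}" unfolding C_def using meet[OF S] meet[OF T] by auto
  qed
  then show ?thesis unfolding weight_colourable_def by blast
qed

lemma petersen_weight_colourable_small:
  assumes b: "weight_bounded petersen_vertices petersen_adj w n" and "w \<le> 4"
    and lt: "\<forall>S\<in>petersen_vertices. n S = 0 \<or> n S < w"
  shows "weight_colourable petersen_vertices petersen_adj ((5 * w + 3) div 4) n"
proof -
  consider "w \<le> 1" | "w = 2" | "w = 3" | "w = 4" using \<open>w \<le> 4\<close> by linarith
  then show ?thesis
  proof cases
    case 1
    then show ?thesis using lt by (intro weight_colourable_zero) auto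
  next
    case 2
    then have "\<forall>S\<in>petersen_vertices. n S \<le> 1" using lt by fastforce
    then show ?thesis using 2 by (simp add: petersen_weight_colourable_3)
  next
    case 3
    then have "\<forall>S\<in>petersen_vertices. n S \<le> 2" using lt by fastforce
    then show ?thesis using 3 b by (simp add: petersen_weight_colourable_4)
  next
    case 4
    then have "\<forall>S\<in>petersen_vertices. n S \<le> 3" using lt by fastforce
    then show ?thesis using 4 b by (simp add: petersen_weight_colourable_5)
  qed
qed

lemma petersen_weight_colourable_irreducible:
  assumes b: "weight_bounded petersen_vertices petersen_adj w n"
    and no_greedy: "\<forall>S\<in>petersen_vertices. 0 < n S
      \<longrightarrow> (5 * w + 3) div 4 < n S + (\<Sum>T\<in>{T\<in>petersen_vertices. petersen_adj S T}. n T)"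
    and no_lower: "\<not> (4 \<le> w \<and> (\<forall>S\<in>petersen_vertices. n S + 2 \<le> w))"
  shows "weight_colourable petersen_vertices petersen_adj ((5 * w + 3) div 4) n"
proof -
  have bound: "\<And>S. S \<in> petersen_vertices \<Longrightarrow> n S \<le> w"
    and bound_adj: "\<And>S T. S \<in> petersen_vertices \<Longrightarrow> T \<in> petersen_vertices \<Longrightarrow> petersen_adj S T
      \<Longrightarrow> n S + n T \<le> w"
    using b unfolding weight_bounded_def by blast+
  have key: "(5 * w + 3) div 4 < n S + 3 * (w - n S)" if "S \<in> petersen_vertices" "0 < n S" for S
  proof -
    let ?N = "{T\<in>petersen_vertices. petersen_adj S T}"
    have "(\<Sum>T\<in>?N. n T) \<le> (\<Sum>T\<in>?N. w - n S)"
      by (rule sum_mono) (use bound_adj that in fastforce)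
    then show ?thesis using no_greedy that card_petersen_neighbours by fastforce
  qed
  have "\<forall>S\<in>petersen_vertices. n S = 0 \<or> n S < w"
  proof
    fix S assume S: "S \<in> petersen_vertices"
    show "n S = 0 \<or> n S < w"
    proof (cases "n S = 0")
      case False
      then have "(5 * w + 3) div 4 < n S + 3 * (w - n S)" using key S by simp
      then show ?thesis using bound[OF S] by arith
    qed simp
  qed
  moreover have "w \<le> 4"
  proof (rule ccontr)
    assume "\<not> w \<le> 4"
    then obtain S where S: "S \<in> petersen_vertices" "w < n S + 2" using no_lower by auto
    then have "(5 * w + 3) div 4 < n S + 3 * (w - n S)" using key \<open>\<not> w \<le> 4\<close> by simp
    then show False using bound[OF S(1)] S(2) \<open>\<not> w \<le> 4\<close> by arith
  qed
  ultimately show ?thesis using petersen_weight_colourable_small b by blast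
qed

lemma petersen_weight_colourable:
  "weight_bounded petersen_vertices petersen_adj w n
    \<Longrightarrow> weight_colourable petersen_vertices petersen_adj ((5 * w + 3) div 4) n"
proof (induction "\<Sum>S\<in>petersen_vertices. n S" arbitrary: n w rule: less_induct)
  case less
  let ?k = "(5 * w + 3) div 4" and ?N = "\<lambda>S. {T\<in>petersen_vertices. petersen_adj S T}"
  consider (zero) "\<forall>S\<in>petersen_vertices. n S = 0"
    | (greedy) S0 where "S0 \<in> petersen_vertices" "0 < n S0" "n S0 + (\<Sum>T\<in>?N S0. n T) \<le> ?k"
    | (lower) S1 where "S1 \<in> petersen_vertices" "0 < n S1"
        "4 \<le> w" "\<forall>S\<in>petersen_vertices. n S + 2 \<le> w"
    | (irreducible) "\<forall>S\<in>petersen_vertices. 0 < n S \<longrightarrow> ?k < n S + (\<Sum>T\<in>?N S. n T)"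
        "\<not> (4 \<le> w \<and> (\<forall>S\<in>petersen_vertices. n S + 2 \<le> w))"
    by (meson not_gr_zero not_le)
  then show ?case
  proof cases
    case zero
    then show ?thesis by (rule weight_colourable_zero)
  next
    case greedy
    have "(\<Sum>S\<in>petersen_vertices. (n(S0 := 0)) S) < (\<Sum>S\<in>petersen_vertices. n S)"
      by (rule sum_strict_mono_ex1[OF finite_petersen_vertices]) (use greedy in auto)
    then have "weight_colourable petersen_vertices petersen_adj ?k (n(S0 := 0))"
      using less.hyps weight_bounded_update_zero[OF less.prems] by blast
    then show ?thesis using weight_colourable_extend[OF simple_graph_petersen] greedy by blast
  next
    case lower
    have "(\<Sum>S\<in>petersen_vertices. n S - 2) < (\<Sum>S\<in>petersen_vertices. n S)"
      by (rule sum_strict_mono_ex1[OF finite_petersen_vertices]) (use lower in \<open>auto intro!: bexI[of _ S1]\<close>)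
    then have "weight_colourable petersen_vertices petersen_adj ((5 * (w - 4) + 3) div 4) (\<lambda>S. n S - 2)"
      using less.hyps weight_bounded_diff[OF less.prems, of 2] lower by fastforce
    then have "weight_colourable petersen_vertices petersen_adj ((5 * (w - 4) + 3) div 4 + 5)
        (\<lambda>S. (n S - 2) + 2)"
      using petersen_two_fold_colouring by (rule weight_colourable_add)
    moreover have "(5 * (w - 4) + 3) div 4 + 5 = ?k" using lower by arith
    ultimately have "weight_colourable petersen_vertices petersen_adj ?k (\<lambda>S. (n S - 2) + 2)"
      by simp
    then show ?thesis by (rule weight_colourable_mono) (intro ballI, linarith)
  next
    case irreducible
    with less.prems show ?thesis by (rule petersen_weight_colourable_irreducible)
  qed
qed

lemma div_four_le_ceiling: "int ((5 * m + 3) div 4) \<le> \<lceil>(5 / 4) * real m\<rceil>"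
proof -
  have "(5 * m + 3) div 4 * 4 \<le> 5 * m + 3" by (rule div_times_less_eq_dividend)
  then have "real ((5 * m + 3) div 4 * 4) \<le> real (5 * m + 3)" by (simp only: of_nat_le_iff)
  then have "real ((5 * m + 3) div 4) * 4 \<le> 5 * real m + 3" by simp
  then show ?thesis by (simp add: le_ceiling_iff)
qed

theorem theorem5p3:
  fixes V :: "'a set" and E :: "'a \<Rightarrow> 'a \<Rightarrow> bool"
  assumes "simple_graph V E"
    and "is_blowup V E petersen_vertices petersen_adj"
  shows "int (chromatic_number V E) \<le> \<lceil>(5/4) * real (clique_number V E)\<rceil>"
proof -
  obtain Q where Q: "blowup_partition V E petersen_vertices petersen_adj Q"
    using assms(2) is_blowup_iff by blast
  let ?\<omega> = "clique_number V E"
  have "weight_bounded petersen_vertices petersen_adj ?\<omega> (\<lambda>S. card (Q S))"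
    using assms(1) simple_graph_petersen Q by (rule blowup_weight_bounded)
  then have "weight_colourable petersen_vertices petersen_adj ((5 * ?\<omega> + 3) div 4) (\<lambda>S. card (Q S))"
    by (rule petersen_weight_colourable)
  then have "chromatic_number V E \<le> (5 * ?\<omega> + 3) div 4"
    using assms(1) Q by (intro blowup_chromatic_number_le)
  then have "int (chromatic_number V E) \<le> int ((5 * ?\<omega> + 3) div 4)" by simp
  also have "\<dots> \<le> \<lceil>(5 / 4) * real ?\<omega>\<rceil>" by (rule div_four_le_ceiling)
  finally show ?thesis .
qed

end
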